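(* There is $q_0$ such that the following holds for every prime power $q\ge q_0$. Let $G$ be a graph on $n=q^2(q^2-q+1)$ vertices such that every set $X\subseteq V(G)$ with $|X|\ge 2^{24}q^2$ satisfies $e(G[X])\ge |X|^2/(256q)$. Then, with $t=\lceil 2^{30}q\log^2 q\rceil$, the number of independent sets of size $t$ in $G$ is at most $(q/\log^2 q)^t$.
   Context: $e(G[X])$ denotes the number of edges of the subgraph of $G$ induced by $X$. Logarithms are natural. *)

theory Defs
  imports "HOL-Analysis.Analysis" "HOL-Number_Theory.Prime_Powers"
begin

definition simple_graph :: "'a set \<Rightarrow> ('a \<Rightarrow> 'a \<Rightarrow> bool) \<Rightarrow> bool" where
  "simple_graph V E \<longleftrightarrow> finite V \<and> (\<forall>u v. E u v \<longrightarrow> u \<in> V \<and> v \<in> V)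
     \<and> (\<forall>u v. E u v \<longrightarrow> E v u) \<and> (\<forall>v. \<not> E v v)"

definition edges_in :: "('a \<Rightarrow> 'a \<Rightarrow> bool) \<Rightarrow> 'a set \<Rightarrow> nat" where
  "edges_in E X = card {{u, v} | u v. u \<in> X \<and> v \<in> X \<and> E u v}"

definition independent_set :: "'a set \<Rightarrow> ('a \<Rightarrow> 'a \<Rightarrow> bool) \<Rightarrow> 'a set \<Rightarrow> bool" where
  "independent_set V E S \<longleftrightarrow> S \<subseteq> V \<and> (\<forall>u\<in>S. \<forall>v\<in>S. \<not> E u v)"

end

theory Submission imports Defs begin

text \<open>
  Kleitman--Winston counting. By the density hypothesis every set \<open>X\<close> of at least
  \<open>m = 2\<^sup>2\<^sup>4 q\<^sup>2\<close> vertices contains a vertex of degree at least \<open>\<delta>|X|\<close> in \<open>X\<close>, where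
  \<open>\<delta> = 1/(256 q)\<close>; in particular no such \<open>X\<close> is independent, which settles \<open>t \<ge> m\<close>.
  Given such a vertex \<open>v\<close> of the current vertex set \<open>A\<close>, an independent set either avoids \<open>v\<close>,
  or contains \<open>v\<close> and avoids its neighbourhood, leaving at most \<open>(1 - \<delta>)|A|\<close> candidates.
  The second alternative can occur at most \<open>s \<approx> 512 q log q\<close> times before fewer than \<open>m\<close>
  candidates remain, and induction on \<open>s\<close> and \<open>|A|\<close> bounds the number of independent
  \<open>t\<close>-sets by \<open>(n + 1)\<^sup>s \<Sum>\<^sub>j\<^sub>\<le>\<^sub>t C(m, j) \<le> (n + 1)\<^sup>s (e m / t)\<^sup>t\<close>, which for
  \<open>t \<approx> 2\<^sup>3\<^sup>0 q log\<^sup>2 q\<close> is at most \<open>(q / log\<^sup>2 q)\<^sup>t\<close>.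
\<close>

definition indep_sets :: "'a set \<Rightarrow> ('a \<Rightarrow> 'a \<Rightarrow> bool) \<Rightarrow> nat \<Rightarrow> 'a set set" where
  "indep_sets A E k = {S. independent_set A E S \<and> card S = k}"

definition degree_in :: "('a \<Rightarrow> 'a \<Rightarrow> bool) \<Rightarrow> 'a set \<Rightarrow> 'a \<Rightarrow> nat" where
  "degree_in E X v = card {u \<in> X. E v u}"

lemma finite_indep_sets: "finite A \<Longrightarrow> finite (indep_sets A E k)"
  by (rule finite_subset[of _ "Pow A"]) (auto simp: indep_sets_def independent_set_def)

lemma card_indep_sets_le_binomial:
  assumes "finite A"
  shows "card (indep_sets A E k) \<le> card A choose k"
proof -
  have "card (indep_sets A E k) \<le> card {B. B \<subseteq> A \<and> card B = k}"
    using assms by (intro card_mono) (auto simp: indep_sets_def independent_set_def)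
  then show ?thesis
    using n_subsets[OF assms] by simp
qed

lemma card_indep_sets_0_le:
  assumes "finite A"
  shows "card (indep_sets A E 0) \<le> 1"
proof -
  have "indep_sets A E 0 \<subseteq> {{}}"
    using assms by (auto simp: indep_sets_def independent_set_def card_eq_0_iff dest: finite_subset)
  then show ?thesis
    using card_mono[of "{{}}"] by simp
qed

lemma card_indep_sets_split:
  assumes "finite A" "v \<in> A" "0 < k"
  shows "card (indep_sets A E k)
    \<le> card (indep_sets (A - {v}) E k) + card (indep_sets (A - {v} - {u. E v u}) E (k - 1))"
proof -
  let ?I1 = "indep_sets (A - {v}) E k" and ?I2 = "indep_sets (A - {v} - {u. E v u}) E (k - 1)"
  have fin: "finite ?I1" "finite ?I2"
    using assms(1) by (auto intro: finite_indep_sets)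
  have "indep_sets A E k \<subseteq> ?I1 \<union> insert v ` ?I2"
  proof
    fix S assume S: "S \<in> indep_sets A E k"
    then have "finite S"
      using assms(1) by (auto simp: indep_sets_def independent_set_def intro: finite_subset)
    show "S \<in> ?I1 \<union> insert v ` ?I2"
    proof (cases "v \<in> S")
      case True
      then have "S - {v} \<in> ?I2"
        using S \<open>finite S\<close> assms(3) by (auto simp: indep_sets_def independent_set_def)
      moreover have "S = insert v (S - {v})"
        using True by blast
      ultimately show ?thesis
        by blast
    next
      case False
      then show ?thesis
        using S by (auto simp: indep_sets_def independent_set_def)
    qed
  qed
  then have "card (indep_sets A E k) \<le> card (?I1 \<union> insert v ` ?I2)"
    using fin by (intro card_mono) auto
  also have "\<dots> \<le> card ?I1 + card (insert v ` ?I2)"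
    by (rule card_Un_le)
  also have "\<dots> \<le> card ?I1 + card ?I2"
    using card_image_le[OF fin(2)] by simp
  finally show ?thesis .
qed

lemma card_indep_sets_branch:
  fixes \<delta> :: real
  assumes "finite A" "v \<in> A" "\<not> E v v" "0 < k" "\<delta> * real (card A) \<le> real (degree_in E A v)"
  obtains A' where "A' \<subseteq> A" "card A' < card A" "real (card A') \<le> (1 - \<delta>) * real (card A)"
    and "card (indep_sets A E k) \<le> card (indep_sets (A - {v}) E k) + card (indep_sets A' E (k - 1))"
proof
  let ?A' = "A - {v} - {u. E v u}"
  have "?A' = A - insert v {u \<in> A. E v u}"
    by auto
  moreover have "card (insert v {u \<in> A. E v u}) = degree_in E A v + 1"
    using assms(1,3) by (simp add: degree_in_def)
  moreover have "insert v {u \<in> A. E v u} \<subseteq> A"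
    using assms(2) by auto
  ultimately have card_A': "card ?A' + degree_in E A v + 1 = card A"
    using assms(1) card_mono[of A "insert v {u \<in> A. E v u}"]
    by (simp add: card_Diff_subset finite_subset)
  then show "card ?A' < card A"
    by linarith
  have "real (card ?A') + real (degree_in E A v) + 1 = real (card A)"
    using arg_cong[OF card_A', of real] by simp
  then show "real (card ?A') \<le> (1 - \<delta>) * real (card A)"
    using assms(5) by (simp add: algebra_simps)
  show "card (indep_sets A E k) \<le> card (indep_sets (A - {v}) E k) + card (indep_sets ?A' E (k - 1))"
    using card_indep_sets_split[OF assms(1,2,4)] .
qed auto

lemma edges_in_le_sum_degree_in:
  assumes "finite X"
  shows "edges_in E X \<le> (\<Sum>u\<in>X. degree_in E X u)"
proof -
  have fin: "finite (SIGMA u:X. {v \<in> X. E u v})"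
    using assms by auto
  have "{{u, v} | u v. u \<in> X \<and> v \<in> X \<and> E u v} = (\<lambda>(u, v). {u, v}) ` (SIGMA u:X. {v \<in> X. E u v})"
    by auto
  then have "edges_in E X \<le> card (SIGMA u:X. {v \<in> X. E u v})"
    unfolding edges_in_def using card_image_le[OF fin] by simp
  also have "\<dots> = (\<Sum>u\<in>X. degree_in E X u)"
    using assms by (simp add: degree_in_def)
  finally show ?thesis .
qed

lemma exists_degree_in_ge_edge_density:
  fixes c :: real
  assumes "finite X" "X \<noteq> {}" "c * real (card X)^2 \<le> real (edges_in E X)"
  shows "\<exists>v\<in>X. c * real (card X) \<le> real (degree_in E X v)"
proof -
  have "Max (degree_in E X ` X) \<in> degree_in E X ` X"
    using assms(1,2) by (intro Max_in) auto
  then obtain w where w: "w \<in> X" "degree_in E X w = Max (degree_in E X ` X)"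
    by (metis imageE)
  have edges: "edges_in E X \<le> card X * degree_in E X w"
    using order_trans[OF edges_in_le_sum_degree_in[OF assms(1)] sum_le_card_Max[OF assms(1)]] w(2)
    by simp
  have "real (card X) * (c * real (card X)) \<le> real (card X) * real (degree_in E X w)"
    using assms(3) of_nat_mono[OF edges, where 'a=real] by (simp add: power2_eq_square algebra_simps)
  moreover have "0 < real (card X)"
    using assms(1,2) by (simp add: card_gt_0_iff)
  ultimately show ?thesis
    using w(1) mult_le_cancel_left_pos by blast
qed

lemma edge_density_imp_high_degree:
  fixes c :: real
  assumes "finite X" "0 < c" "0 < card X" "c * real (card X)^2 \<le> real (edges_in E X)"
  shows "0 < edges_in E X" and "\<exists>v\<in>X. c * real (card X) \<le> real (degree_in E X v)"
proof -
  have "0 < c * real (card X)^2"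
    using assms(2,3) by simp
  then show "0 < edges_in E X"
    using assms(4) by linarith
  show "\<exists>v\<in>X. c * real (card X) \<le> real (degree_in E X v)"
    using assms(1,3,4) by (intro exists_degree_in_ge_edge_density) auto
qed

lemma edges_in_eq_0_if_independent:
  assumes "independent_set V E S"
  shows "edges_in E S = 0"
proof -
  have "{{u, v} | u v. u \<in> S \<and> v \<in> S \<and> E u v} = {}"
    using assms unfolding independent_set_def by blast
  then show ?thesis
    by (simp only: edges_in_def card.empty)
qed

lemma indep_sets_eq_empty_if_dense:
  assumes "\<And>S. S \<subseteq> V \<Longrightarrow> m \<le> card S \<Longrightarrow> 0 < edges_in E S" "m \<le> t"
  shows "indep_sets V E t = {}"
proof -
  have "S \<notin> indep_sets V E t" for S
  proof
    assume "S \<in> indep_sets V E t"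
    then have S: "independent_set V E S" "m \<le> card S"
      using assms(2) by (auto simp: indep_sets_def)
    then have "0 < edges_in E S"
      using assms(1) by (simp add: independent_set_def)
    then show False
      using edges_in_eq_0_if_independent[OF S(1)] by simp
  qed
  then show ?thesis
    by blast
qed

lemma sum_binomial_le_exp_power:
  fixes m t :: nat
  assumes t0: "0 < t" and tm: "t \<le> m"
  shows "real (\<Sum>j\<le>t. m choose j) \<le> (exp 1 * real m / real t)^t"
proof -
  define x where "x = real t / real m"
  have x0: "0 < x" and x1: "x \<le> 1"
    using t0 tm by (auto simp: x_def)
  have "real (\<Sum>j\<le>t. m choose j) * x^t = (\<Sum>j\<le>t. real (m choose j) * x^t)"
    by (simp add: sum_distrib_right)
  also have "\<dots> \<le> (\<Sum>j\<le>t. real (m choose j) * x^j)"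
    using x0 x1 by (intro sum_mono mult_left_mono power_decreasing) auto
  also have "\<dots> \<le> (\<Sum>j\<le>m. real (m choose j) * x^j)"
    using tm x0 by (intro sum_mono2) auto
  also have "\<dots> = (x + 1)^m"
    by (simp add: binomial_ring)
  also have "\<dots> \<le> exp x ^ m"
    using x0 by (intro power_mono) (auto simp: add.commute)
  also have "\<dots> = exp 1 ^ t"
    using tm t0 by (simp add: x_def flip: exp_of_nat_mult)
  finally have h: "real (\<Sum>j\<le>t. m choose j) * x^t \<le> exp 1 ^ t" .
  have "(exp 1 * real m / real t)^t = exp 1 ^ t / x^t"
    using t0 tm by (simp add: x_def power_divide power_mult_distrib)
  then show ?thesis
    using h x0 by (simp add: pos_le_divide_eq)
qed

lemma power_Suc_add_power_le: "(n::nat)^Suc s + n^s \<le> (n + 1)^Suc s"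
proof -
  have "n^Suc s + n^s = (n + 1) * n^s"
    by simp
  also have "\<dots> \<le> (n + 1) * (n + 1)^s"
    by (intro mult_left_mono power_mono) auto
  finally show ?thesis
    by simp
qed

context
  fixes V :: "'a set" and E :: "'a \<Rightarrow> 'a \<Rightarrow> bool" and \<delta> :: real and m :: nat
  assumes finite_V: "finite V" and \<delta>_nonneg: "0 \<le> \<delta>" and \<delta>_le_1: "\<delta> \<le> 1" and irrefl: "\<And>v. \<not> E v v"
    and high_degree: "\<And>X. X \<subseteq> V \<Longrightarrow> m \<le> card X \<Longrightarrow> \<exists>v\<in>X. \<delta> * real (card X) \<le> real (degree_in E X v)"
begin

lemma card_indep_sets_le_power_Suc_of_delete_bound:
  assumes IH: "\<And>A k. A \<subseteq> V \<Longrightarrow> real (card A) * (1 - \<delta>)^s < real m \<Longrightarrow>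
      card (indep_sets A E k) \<le> (card A + 1)^s * (\<Sum>j\<le>k. m choose j)"
    and A: "A \<subseteq> V" "real (card A) * (1 - \<delta>)^Suc s < real m"
    and v: "v \<in> A" "\<delta> * real (card A) \<le> real (degree_in E A v)" and "0 < k"
    and delete: "card (indep_sets (A - {v}) E k) \<le> card A ^ Suc s * (\<Sum>j\<le>k. m choose j)"
  shows "card (indep_sets A E k) \<le> (card A + 1)^Suc s * (\<Sum>j\<le>k. m choose j)"
proof -
  from A(1) finite_V have "finite A"
    by (rule finite_subset)
  then obtain A' where A': "A' \<subseteq> A" "card A' < card A" "real (card A') \<le> (1 - \<delta>) * real (card A)"
    and split: "card (indep_sets A E k) \<le> card (indep_sets (A - {v}) E k) + card (indep_sets A' E (k - 1))"
    using card_indep_sets_branch[OF _ v(1) irrefl \<open>0 < k\<close> v(2)] by blast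
  have "real (card A') * (1 - \<delta>)^s \<le> (1 - \<delta>) * real (card A) * (1 - \<delta>)^s"
    using A'(3) \<delta>_le_1 by (intro mult_right_mono) auto
  also have "\<dots> = real (card A) * (1 - \<delta>)^Suc s"
    by simp
  finally have "card (indep_sets A' E (k - 1)) \<le> (card A' + 1)^s * (\<Sum>j\<le>k - 1. m choose j)"
    using IH[of A' "k - 1"] A'(1) A by auto
  also have "\<dots> \<le> card A ^ s * (\<Sum>j\<le>k. m choose j)"
    using A'(2) by (intro mult_mono power_mono sum_mono2) auto
  finally have "card (indep_sets A E k) \<le> (card A ^ Suc s + card A ^ s) * (\<Sum>j\<le>k. m choose j)"
    using split delete by (simp add: algebra_simps)
  also have "\<dots> \<le> (card A + 1)^Suc s * (\<Sum>j\<le>k. m choose j)"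
    using power_Suc_add_power_le by (rule mult_right_mono) simp
  finally show ?thesis .
qed

lemma card_indep_sets_le_power_sum_binomial_Suc:
  assumes IH: "\<And>A k. A \<subseteq> V \<Longrightarrow> real (card A) * (1 - \<delta>)^s < real m \<Longrightarrow>
      card (indep_sets A E k) \<le> (card A + 1)^s * (\<Sum>j\<le>k. m choose j)"
    and "A \<subseteq> V" "real (card A) * (1 - \<delta>)^Suc s < real m"
  shows "card (indep_sets A E k) \<le> (card A + 1)^Suc s * (\<Sum>j\<le>k. m choose j)"
proof -
  from assms(2) finite_V have "finite A"
    by (rule finite_subset)
  then show ?thesis
    using assms(2,3)
  proof (induction A arbitrary: k rule: finite_psubset_induct)
    case (psubset A)
    have "(1 - \<delta>)^s \<le> 1"
      using \<delta>_nonneg \<delta>_le_1 by (intro power_le_one) auto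
    then consider "real (card A) * (1 - \<delta>)^s < real m" | "k = 0" | "m \<le> card A" "0 < k"
      using mult_left_le[of "(1 - \<delta>)^s" "real (card A)"] by fastforce
    then show ?case
    proof cases
      case 1
      then have "card (indep_sets A E k) \<le> (card A + 1)^s * (\<Sum>j\<le>k. m choose j)"
        using IH psubset.prems(1) by blast
      also have "\<dots> \<le> (card A + 1)^Suc s * (\<Sum>j\<le>k. m choose j)"
        by (intro mult_right_mono power_increasing) auto
      finally show ?thesis .
    next
      case 2
      have "1 \<le> (card A + 1)^Suc s * (\<Sum>j\<le>0. m choose j)"
        using one_le_power[of "card A + 1" "Suc s"] by simp
      then show ?thesis
        using 2 order_trans[OF card_indep_sets_0_le[OF psubset.hyps(1)]] by blast
    next
      case 3
      then obtain v where v: "v \<in> A" "\<delta> * real (card A) \<le> real (degree_in E A v)"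
        using high_degree psubset.prems(1) by blast
      then have card_A: "card (A - {v}) + 1 = card A"
        using card_Suc_Diff1[OF psubset.hyps(1)] by simp
      then have "real (card (A - {v})) * (1 - \<delta>)^Suc s < real m"
        using psubset.prems(2) \<delta>_le_1 mult_right_mono[of "real (card (A - {v}))" "real (card A)" "(1 - \<delta>)^Suc s"]
        by simp
      then have "card (indep_sets (A - {v}) E k) \<le> card A ^ Suc s * (\<Sum>j\<le>k. m choose j)"
        using psubset.IH[of "A - {v}" k] psubset.prems(1) v(1) card_A by auto
      then show ?thesis
        using card_indep_sets_le_power_Suc_of_delete_bound[OF IH psubset.prems v \<open>0 < k\<close>] by blast
    qed
  qed
qed

text \<open>The exponent \<open>s\<close> bounds the number of vertices put into the independent set while the
  current vertex set is still large; each such step shrinks it by the factor \<open>1 - \<delta>\<close>.\<close>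
lemma card_indep_sets_le_power_sum_binomial:
  "A \<subseteq> V \<Longrightarrow> real (card A) * (1 - \<delta>)^s < real m \<Longrightarrow>
    card (indep_sets A E k) \<le> (card A + 1)^s * (\<Sum>j\<le>k. m choose j)"
proof (induction s arbitrary: A k)
  case 0
  then have "card (indep_sets A E k) \<le> card A choose k"
    using finite_V by (intro card_indep_sets_le_binomial) (auto dest: finite_subset)
  also have "\<dots> \<le> m choose k"
    using "0.prems"(2) by (intro binomial_right_mono) simp
  also have "\<dots> \<le> (\<Sum>j\<le>k. m choose j)"
    by (rule member_le_sum) auto
  finally show ?case
    by simp
next
  case (Suc s)
  then show ?case
    using card_indep_sets_le_power_sum_binomial_Suc by blast
qed

lemma card_indep_sets_le_exp_power:
  fixes t :: nat
  assumes "real (card V) * (1 - \<delta>)^s < real m" "0 < t" "t \<le> m"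
  shows "real (card (indep_sets V E t)) \<le> real (card V + 1)^s * (exp 1 * real m / real t)^t"
proof -
  have "card (indep_sets V E t) \<le> (card V + 1)^s * (\<Sum>j\<le>t. m choose j)"
    using card_indep_sets_le_power_sum_binomial[OF order_refl assms(1)] .
  then have "real (card (indep_sets V E t)) \<le> real (card V + 1)^s * real (\<Sum>j\<le>t. m choose j)"
    by (metis of_nat_le_iff of_nat_mult of_nat_power)
  also have "\<dots> \<le> real (card V + 1)^s * (exp 1 * real m / real t)^t"
    using sum_binomial_le_exp_power[OF assms(2,3)] by (intro mult_left_mono) auto
  finally show ?thesis .
qed

end

lemma one_le_ln_nat: "3 \<le> q \<Longrightarrow> 1 \<le> ln (real q)"
  using exp_le by (subst ln_ge_iff) auto

lemma power_one_minus_le_exp: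
  fixes x :: real
  assumes "x \<le> 1"
  shows "(1 - x)^n \<le> exp (- (x * real n))"
proof -
  have "(1 - x)^n \<le> exp (- x)^n"
    using assms exp_ge_add_one_self[of "- x"] by (intro power_mono) auto
  then show ?thesis
    by (simp add: exp_of_nat_mult[symmetric] mult.commute)
qed

lemma card_mul_power_one_minus_lt:
  fixes q n s :: nat
  assumes "3 \<le> q" "n \<le> q^4" "512 * real q * ln (real q) \<le> real s"
  shows "real n * (1 - 1 / (256 * real q))^s < 2^24 * real q^2"
proof -
  have q: "0 < real q"
    using assms(1) by simp
  have "(1 - 1 / (256 * real q))^s \<le> exp (- (1 / (256 * real q) * real s))"
    using q by (intro power_one_minus_le_exp) simp
  also have "\<dots> \<le> exp (- ln (real q ^ 2))"
    using assms(3) q by (simp add: ln_realpow field_simps)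
  also have "\<dots> = 1 / real q^2"
    using q by (simp add: exp_minus inverse_eq_divide)
  finally have "real n * (1 - 1 / (256 * real q))^s \<le> real q^4 * (1 / real q^2)"
    using assms(1,2) by (intro mult_mono) (auto simp flip: of_nat_power)
  also have "\<dots> < 2^24 * real q^2"
    using q by (simp add: power2_eq_square power4_eq_xxxx)
  finally show ?thesis .
qed

lemma power_le_sixteen_power:
  fixes q n s t :: nat
  assumes "3 \<le> q" "n \<le> q^4" "real s \<le> 512 * real q * ln (real q) + 1"
    and "2^30 * real q * ln (real q)^2 \<le> real t"
  shows "real (n + 1)^s \<le> 16^t"
proof -
  have q: "3 \<le> real q" and ln_q: "1 \<le> ln (real q)"
    using assms(1) one_le_ln_nat by auto
  have "real n \<le> real q^4"
    using assms(2) by (metis of_nat_le_iff of_nat_power)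
  moreover have "1 \<le> real q^4"
    using q by simp
  ultimately have "real n + 1 \<le> real q^4 * 3"
    by linarith
  also have "\<dots> \<le> real q^5"
    using q by (simp add: eval_nat_numeral)
  finally have "real (n + 1)^s \<le> (real q^5)^s"
    by (intro power_mono) auto
  also have "\<dots> = exp (real (5 * s) * ln (real q))"
    using q by (simp only: exp_of_nat_mult exp_ln power_mult)
  also have "\<dots> \<le> exp (real t)"
  proof -
    have "1 \<le> real q * ln (real q)"
      using q ln_q mult_mono[of 1 "real q" 1 "ln (real q)"] by simp
    then have "ln (real q) \<le> real q * ln (real q)^2"
      using ln_q mult_right_mono[of 1 "real q * ln (real q)" "ln (real q)"] by (simp add: power2_eq_square)
    moreover have "real s * (5 * ln (real q)) \<le> (512 * real q * ln (real q) + 1) * (5 * ln (real q))"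
      using assms(3) ln_q by (intro mult_right_mono) auto
    ultimately have "real (5 * s) * ln (real q) \<le> 2565 * real q * ln (real q)^2"
      by (simp add: power2_eq_square algebra_simps)
    then show ?thesis
      using assms(4) q ln_q by simp
  qed
  also have "\<dots> \<le> 16^t"
  proof -
    have "exp 1 ^ t \<le> (16::real)^t"
      using exp_le by (intro power_mono) auto
    then show ?thesis
      by (simp add: exp_of_nat_mult[symmetric])
  qed
  finally show ?thesis .
qed

lemma exp_mult_div_le:
  fixes q t :: nat
  assumes "3 \<le> q" "2^30 * real q * ln (real q)^2 \<le> real t"
  shows "exp 1 * (2^24 * real q^2) / real t \<le> real q / (16 * ln (real q)^2)"
proof -
  have q: "0 < real q" and L: "0 < ln (real q)^2"
    using assms(1) one_le_ln_nat[OF assms(1)] by auto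
  have bound: "0 < 2^30 * real q * ln (real q)^2"
    using q L by simp
  then have "exp 1 * (2^24 * real q^2) / real t \<le> exp 1 * (2^24 * real q^2) / (2^30 * real q * ln (real q)^2)"
    using assms(2) q by (intro divide_left_mono mult_pos_pos) auto
  also have "\<dots> = exp 1 / 64 * (real q / ln (real q)^2)"
    using q L by (simp add: power2_eq_square field_simps)
  also have "\<dots> \<le> 4 / 64 * (real q / ln (real q)^2)"
    using exp_le q L by (intro mult_right_mono) auto
  finally show ?thesis
    by simp
qed

lemma power_mult_exp_power_le:
  fixes q n s t :: nat
  assumes "3 \<le> q" "n \<le> q^4" "real s \<le> 512 * real q * ln (real q) + 1"
    and "2^30 * real q * ln (real q)^2 \<le> real t"
  shows "real (n + 1)^s * (exp 1 * (2^24 * real q^2) / real t)^t \<le> (real q / ln (real q)^2)^t"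
proof -
  have "real (n + 1)^s * (exp 1 * (2^24 * real q^2) / real t)^t
      \<le> 16^t * (real q / (16 * ln (real q)^2))^t"
    using power_le_sixteen_power[OF assms] exp_mult_div_le[OF assms(1,4)]
    by (intro mult_mono power_mono) auto
  also have "\<dots> = (real q / ln (real q)^2)^t"
    by (simp flip: power_mult_distrib)
  finally show ?thesis .
qed

lemma card_indep_sets_le_of_edge_density:
  fixes q t :: nat and V :: "'a set"
  assumes "3 \<le> q" "simple_graph V E" "card V \<le> q^4"
    and dense: "\<And>X. X \<subseteq> V \<Longrightarrow> 2^24 * real q^2 \<le> real (card X) \<Longrightarrow>
      real (card X)^2 / (256 * real q) \<le> real (edges_in E X)"
    and t: "t = nat \<lceil>2^30 * real q * ln (real q)^2\<rceil>"
  shows "real (card (indep_sets V E t)) \<le> (real q / ln (real q)^2)^t"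
proof -
  define m :: nat where "m = 2^24 * q^2"
  define \<delta> :: real where "\<delta> = 1 / (256 * real q)"
  have q: "0 < real q" and L: "0 < ln (real q)^2"
    using assms(1) one_le_ln_nat[OF assms(1)] by auto
  have V: "finite V" "\<And>v. \<not> E v v"
    using assms(2) by (auto simp: simple_graph_def)
  have t_ge: "2^30 * real q * ln (real q)^2 \<le> real t"
    unfolding t by linarith
  have "0 < m" "0 < \<delta>"
    using assms(1) by (simp_all add: m_def \<delta>_def)
  have high_degree: "0 < edges_in E X" "\<exists>v\<in>X. \<delta> * real (card X) \<le> real (degree_in E X v)"
    if "X \<subseteq> V" "m \<le> card X" for X
  proof -
    have "finite X"
      using that(1) V(1) by (rule finite_subset)
    moreover have "0 < card X"
      using that(2) \<open>0 < m\<close> by linarith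
    moreover have "2^24 * real q^2 \<le> real (card X)"
      using of_nat_mono[OF that(2), where 'a=real] by (simp add: m_def)
    then have "\<delta> * real (card X)^2 \<le> real (edges_in E X)"
      using dense[OF that(1)] by (simp add: \<delta>_def)
    ultimately show "0 < edges_in E X" "\<exists>v\<in>X. \<delta> * real (card X) \<le> real (degree_in E X v)"
      using edge_density_imp_high_degree[OF _ \<open>0 < \<delta>\<close>] by blast+
  qed
  show ?thesis
  proof (cases "m \<le> t")
    case True
    have "indep_sets V E t = {}"
      using high_degree(1) True by (intro indep_sets_eq_empty_if_dense) auto
    then show ?thesis
      using q L by simp
  next
    case False
    define s where "s = nat \<lceil>512 * real q * ln (real q)\<rceil>"
    have "0 \<le> 512 * real q * ln (real q)"
      using q one_le_ln_nat[OF assms(1)] by simp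
    then have s: "512 * real q * ln (real q) \<le> real s" "real s \<le> 512 * real q * ln (real q) + 1"
      unfolding s_def by (linarith, simp add: of_nat_nat)
    have "real (card V) * (1 - \<delta>)^s < real m"
      using card_mul_power_one_minus_lt[OF assms(1,3) s(1)] by (simp add: \<delta>_def m_def)
    moreover have "0 < 2^30 * real q * ln (real q)^2"
      using q L by simp
    then have "0 < t"
      using t_ge by linarith
    moreover have "\<delta> \<le> 1"
      using assms(1) by (simp add: \<delta>_def)
    ultimately have "real (card (indep_sets V E t)) \<le> real (card V + 1)^s * (exp 1 * real m / real t)^t"
      using False V \<open>0 < \<delta>\<close> high_degree(2) by (intro card_indep_sets_le_exp_power) auto
    also have "\<dots> \<le> (real q / ln (real q)^2)^t"
      using power_mult_exp_power_le[OF assms(1,3) s(2) t_ge] by (simp add: m_def)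
    finally show ?thesis .
  qed
qed

theorem mainTheorem10:
  shows "\<exists>q0::nat. \<forall>q::nat. q \<ge> q0 \<longrightarrow> primepow q \<longrightarrow>
    (\<forall>(V::nat set) E. simple_graph V E \<longrightarrow> card V = q^2 * (q^2 - q + 1) \<longrightarrow>
      (\<forall>X\<subseteq>V. real (card X) \<ge> 2^24 * real q^2 \<longrightarrow>
          real (edges_in E X) \<ge> real (card X)^2 / (256 * real q)) \<longrightarrow>
      (let t = nat \<lceil>2^30 * real q * (ln (real q))^2\<rceil> in
        real (card {S. independent_set V E S \<and> card S = t})
          \<le> (real q / (ln (real q))^2) ^ t))"
proof (intro exI[of _ 3] allI impI)
  fix q :: nat and V :: "nat set" and E
  assume q: "3 \<le> q" and "primepow q" and G: "simple_graph V E"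
    and card_V: "card V = q^2 * (q^2 - q + 1)"
    and dense: "\<forall>X\<subseteq>V. real (card X) \<ge> 2^24 * real q^2 \<longrightarrow>
      real (edges_in E X) \<ge> real (card X)^2 / (256 * real q)"
  have "q < q * q"
    using q by simp
  then have "q^2 - q + 1 \<le> q^2"
    using q by (simp only: power2_eq_square)
  then have "card V \<le> q^4"
    unfolding card_V by (metis mult_le_mono2 power2_eq_square power4_eq_xxxx mult.assoc)
  then show "let t = nat \<lceil>2^30 * real q * (ln (real q))^2\<rceil> in
      real (card {S. independent_set V E S \<and> card S = t}) \<le> (real q / (ln (real q))^2) ^ t"
    using card_indep_sets_le_of_edge_density[OF q G _ _ refl] dense
    by (simp add: Let_def indep_sets_def)
qed

end
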